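(* Let $(w^k)_{k\in\mathcal{K}}$ be a tuple of vectors $w^k\in\mathbb{R}^n$, $w^k\ge0$. Then $g\bigl(\sum_{k\in\mathcal{K}}w^k\bigr)=\sum_{k\in\mathcal{K}}g^k(w^k)$ (i.e. the composition $(w^k)$ is bilevel feasible) if and only if $\mathbf{T}\bigl(\sum_{k\in\mathcal{K}}w^k\bigr)=\bigcap_{k\in\mathcal{K}}\mathbf{T}^k(w^k)$.
   Context: Multi-commodity network pricing setting: $G=(\mathcal{V},\mathcal{A})$ directed graph with arc costs $c\ge0$, nonempty tolled arc set $\mathcal{A}_1\subsetneq\mathcal{A}$, $n=|\mathcal{A}_1|$, $N$ node–arc incidence matrix; finite set $\mathcal{K}$ of commodities, commodity $k$ having origin $o^k$ and destination $d^k$ connected by a path of arcs not in $\mathcal{A}_1$; $b^k_{o^k}=1$, $b^k_{d^k}=-1$, other entries $0$; $\mathcal{X}^k=\{x\in\mathbb{R}^{\mathcal{A}}: Nx=b^k,\ x\ge0\}$; $x_{\mathcal{A}_1}$ is the restriction of $x$ to $\mathcal{A}_1$; $t\in\mathbb{R}^n$ is extended by zeros to $\bar t\in\mathbb{R}^{\mathcal{A}}$. For $t\in\mathbb{R}^n$ let $f^k(t)=\min\{c^\top x+t^\top x_{\mathcal{A}_1}: x\in\mathcal{X}^k\}$ if $t\ge0$, $-\infty$ otherwise; $f=\sum_k f^k$; $g^k(w)=\sup_t\{f^k(t)-t^\top w\}$, $g(w)=\sup_t\{f(t)-t^\top w\}$. For $w\ge0$, $\mathbf{T}(w)$ is the set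 of $t$ that are parts of optimal solutions of $\max_{t,(y^k)}\{\sum_{k\in\mathcal{K}}(b^k)^\top y^k-w^\top t: N^\top y^k-\bar t\le c\ \forall k,\ t\ge0\}$, and $\mathbf{T}^k(w)$ is the set of $t$ that are parts of optimal solutions of $\max_{t,y}\{(b^k)^\top y-w^\top t: N^\top y-\bar t\le c,\ t\ge0\}$. *)

theory Defs
  imports "HOL-Library.Extended_Real"
begin

text \<open>A multi-commodity network pricing instance.
  nodes = V, arcs = A, tolled = A1, src/tgt = tail/head of an arc,
  cost = c, comms = K, orig/dest = o^k, d^k.\<close>
record ('v, 'e, 'k) network =
  nodes  :: "'v set"
  arcs   :: "'e set"
  tolled :: "'e set"
  src    :: "'e \<Rightarrow> 'v"
  tgt    :: "'e \<Rightarrow> 'v"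
  cost   :: "'e \<Rightarrow> real"
  comms  :: "'k set"
  orig   :: "'k \<Rightarrow> 'v"
  dest   :: "'k \<Rightarrow> 'v"

text \<open>Vectors in R^n, n = |A1|, represented as functions vanishing outside A1.\<close>
definition tollvecs :: "'e set \<Rightarrow> ('e \<Rightarrow> real) set" where
  "tollvecs A1 = {t. \<forall>e. e \<notin> A1 \<longrightarrow> t e = 0}"

definition netflow :: "('v,'e,'k,'z) network_scheme \<Rightarrow> ('e \<Rightarrow> real) \<Rightarrow> 'v \<Rightarrow> real" where
  "netflow G x v = (\<Sum>e\<in>arcs G. if src G e = v then x e else 0)
                 - (\<Sum>e\<in>arcs G. if tgt G e = v then x e else 0)"

definition bvec :: "('v,'e,'k,'z) network_scheme \<Rightarrow> 'k \<Rightarrow> 'v \<Rightarrow> real" where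
  "bvec G k v = (if v = orig G k then 1 else 0) - (if v = dest G k then 1 else 0)"

definition Xset :: "('v,'e,'k,'z) network_scheme \<Rightarrow> 'k \<Rightarrow> ('e \<Rightarrow> real) set" where
  "Xset G k = {x. (\<forall>e\<in>arcs G. 0 \<le> x e) \<and> (\<forall>v\<in>nodes G. netflow G x v = bvec G k v)}"

definition text_bar :: "('v,'e,'k,'z) network_scheme \<Rightarrow> ('e \<Rightarrow> real) \<Rightarrow> 'e \<Rightarrow> real" where
  "text_bar G t e = (if e \<in> tolled G then t e else 0)"

definition tdot :: "('v,'e,'k,'z) network_scheme \<Rightarrow> ('e \<Rightarrow> real) \<Rightarrow> ('e \<Rightarrow> real) \<Rightarrow> real" where
  "tdot G t w = (\<Sum>e\<in>tolled G. t e * w e)"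

definition fk :: "('v,'e,'k,'z) network_scheme \<Rightarrow> 'k \<Rightarrow> ('e \<Rightarrow> real) \<Rightarrow> ereal" where
  "fk G k t = (if \<forall>e\<in>tolled G. 0 \<le> t e
      then Inf ((\<lambda>x. ereal ((\<Sum>e\<in>arcs G. cost G e * x e) + (\<Sum>e\<in>tolled G. t e * x e))) ` Xset G k)
      else -\<infinity>)"

definition ftot :: "('v,'e,'k,'z) network_scheme \<Rightarrow> ('e \<Rightarrow> real) \<Rightarrow> ereal" where
  "ftot G t = (\<Sum>k\<in>comms G. fk G k t)"

definition gk :: "('v,'e,'k,'z) network_scheme \<Rightarrow> 'k \<Rightarrow> ('e \<Rightarrow> real) \<Rightarrow> ereal" where
  "gk G k w = (SUP t\<in>tollvecs (tolled G). fk G k t - ereal (tdot G t w))"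

definition gtot :: "('v,'e,'k,'z) network_scheme \<Rightarrow> ('e \<Rightarrow> real) \<Rightarrow> ereal" where
  "gtot G w = (SUP t\<in>tollvecs (tolled G). ftot G t - ereal (tdot G t w))"

definition dual_feas :: "('v,'e,'k,'z) network_scheme \<Rightarrow> ('e \<Rightarrow> real) \<Rightarrow> ('v \<Rightarrow> real) \<Rightarrow> bool" where
  "dual_feas G t y \<longleftrightarrow> (\<forall>e\<in>tolled G. 0 \<le> t e) \<and>
     (\<forall>e\<in>arcs G. y (src G e) - y (tgt G e) - text_bar G t e \<le> cost G e)"

definition bdot :: "('v,'e,'k,'z) network_scheme \<Rightarrow> 'k \<Rightarrow> ('v \<Rightarrow> real) \<Rightarrow> real" where
  "bdot G k y = (\<Sum>v\<in>nodes G. bvec G k v * y v)"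

definition Tk :: "('v,'e,'k,'z) network_scheme \<Rightarrow> 'k \<Rightarrow> ('e \<Rightarrow> real) \<Rightarrow> ('e \<Rightarrow> real) set" where
  "Tk G k w = {t \<in> tollvecs (tolled G). \<exists>y. dual_feas G t y \<and>
      (\<forall>t'\<in>tollvecs (tolled G). \<forall>y'. dual_feas G t' y' \<longrightarrow>
          bdot G k y' - tdot G t' w \<le> bdot G k y - tdot G t w)}"

definition Ttot :: "('v,'e,'k,'z) network_scheme \<Rightarrow> ('e \<Rightarrow> real) \<Rightarrow> ('e \<Rightarrow> real) set" where
  "Ttot G w = {t \<in> tollvecs (tolled G). \<exists>Y. (\<forall>k\<in>comms G. dual_feas G t (Y k)) \<and>
      (\<forall>t'\<in>tollvecs (tolled G). \<forall>Y'. (\<forall>k\<in>comms G. dual_feas G t' (Y' k)) \<longrightarrow>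
          (\<Sum>k\<in>comms G. bdot G k (Y' k)) - tdot G t' w \<le> (\<Sum>k\<in>comms G. bdot G k (Y k)) - tdot G t w)}"

definition valid_network :: "('v,'e,'k,'z) network_scheme \<Rightarrow> bool" where
  "valid_network G \<longleftrightarrow>
     finite (nodes G) \<and> finite (arcs G) \<and>
     (\<forall>e\<in>arcs G. src G e \<in> nodes G \<and> tgt G e \<in> nodes G) \<and>
     (\<forall>e\<in>arcs G. 0 \<le> cost G e) \<and>
     tolled G \<noteq> {} \<and> tolled G \<subset> arcs G \<and>
     finite (comms G) \<and> comms G \<noteq> {} \<and>
     (\<forall>k\<in>comms G. orig G k \<in> nodes G \<and> dest G k \<in> nodes G \<and> orig G k \<noteq> dest G k \<and>
        (orig G k, dest G k) \<in> {(src G e, tgt G e) | e. e \<in> arcs G - tolled G}\<^sup>*)"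

end

theory Submission
  imports Defs "HOL-Analysis.Analysis"
begin

(* For tolls t \<ge> 0, LP duality for shortest paths identifies f^k(t) with the length of a
   shortest o^k-d^k walk under the arc lengths c + t; the optimal potential is the distance to
   d^k. Hence g^k(w^k) and g(\<Sum> w^k) are the suprema over t \<ge> 0 of
   \<phi>_k(t) = f^k(t) - t\<cdot>w^k and of \<Sum>_k \<phi>_k, and T^k(w^k), T(\<Sum> w^k) are the
   corresponding sets of maximizers. These suprema are attained: capping all tolls at the
   cost of a toll-free route system does not decrease \<Sum>_k \<phi>_k, which is an infimum of
   continuous functions, so it attains its maximum on a compact box. Finally
   max \<Sum>_k \<phi>_k \<le> \<Sum>_k max \<phi>_k, with equality iff a maximizer of the sum
   maximizes every \<phi>_k, i.e. iff the maximizers of the sum are the common maximizers. *)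

section \<open>Maximizers\<close>

definition maximizers :: "'a set \<Rightarrow> ('a \<Rightarrow> 'b::linorder) \<Rightarrow> 'a set" where
  "maximizers A f = {t \<in> A. \<forall>t'\<in>A. f t' \<le> f t}"

lemma maximizers_partial_max:
  fixes obj :: "'y \<Rightarrow> real"
  assumes feas: "\<And>t y. F t y \<Longrightarrow> P t"
    and attained: "\<And>t. t \<in> S \<Longrightarrow> P t \<Longrightarrow> \<exists>y. F t y \<and> obj y = r t"
    and bounded: "\<And>t y. t \<in> S \<Longrightarrow> F t y \<Longrightarrow> obj y \<le> r t"
  shows "{t \<in> S. \<exists>y. F t y \<and> (\<forall>t'\<in>S. \<forall>y'. F t' y' \<longrightarrow> obj y' - d t' \<le> obj y - d t)}
       = maximizers {t \<in> S. P t} (\<lambda>t. r t - d t)"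
proof (intro set_eqI iffI)
  fix t assume "t \<in> {t \<in> S. \<exists>y. F t y \<and> (\<forall>t'\<in>S. \<forall>y'. F t' y' \<longrightarrow> obj y' - d t' \<le> obj y - d t)}"
  then obtain y where t: "t \<in> S" "F t y"
    and opt: "\<And>t' y'. t' \<in> S \<Longrightarrow> F t' y' \<Longrightarrow> obj y' - d t' \<le> obj y - d t" by blast
  have "r t' - d t' \<le> r t - d t" if "t' \<in> S" "P t'" for t'
    using attained[OF that] opt[OF that(1)] bounded[OF t] by force
  with t feas show "t \<in> maximizers {t \<in> S. P t} (\<lambda>t. r t - d t)"
    unfolding maximizers_def by blast
next
  fix t assume "t \<in> maximizers {t \<in> S. P t} (\<lambda>t. r t - d t)"
  then have t: "t \<in> S" "P t" and opt: "\<And>t'. t' \<in> S \<Longrightarrow> P t' \<Longrightarrow> r t' - d t' \<le> r t - d t"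
    unfolding maximizers_def by auto
  obtain y where y: "F t y" "obj y = r t" using attained[OF t] by blast
  have "obj y' - d t' \<le> obj y - d t" if "t' \<in> S" "F t' y'" for t' y'
    using bounded[OF that] opt[OF that(1) feas[OF that(2)]] y(2) by linarith
  with t y show "t \<in> {t \<in> S. \<exists>y. F t y \<and> (\<forall>t'\<in>S. \<forall>y'. F t' y' \<longrightarrow> obj y' - d t' \<le> obj y - d t)}"
    by blast
qed

lemma max_sum_eq_sum_max_iff_maximizers_eq_Inter:
  fixes \<phi> :: "'k \<Rightarrow> 'a \<Rightarrow> real"
  assumes K: "finite K" "K \<noteq> {}"
    and tk: "\<And>k. k \<in> K \<Longrightarrow> tk k \<in> maximizers A (\<phi> k)"
    and t0: "t0 \<in> maximizers A (\<lambda>t. \<Sum>k\<in>K. \<phi> k t)"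
  shows "(\<Sum>k\<in>K. \<phi> k t0) = (\<Sum>k\<in>K. \<phi> k (tk k)) \<longleftrightarrow>
         maximizers A (\<lambda>t. \<Sum>k\<in>K. \<phi> k t) = (\<Inter>k\<in>K. maximizers A (\<phi> k))"
proof -
  have tk_max: "tk k \<in> A" "\<And>t. t \<in> A \<Longrightarrow> \<phi> k t \<le> \<phi> k (tk k)" if "k \<in> K" for k
    using tk[OF that] unfolding maximizers_def by auto
  have sum_eq_iff: "(\<Sum>k\<in>K. \<phi> k t) = (\<Sum>k\<in>K. \<phi> k (tk k)) \<longleftrightarrow> t \<in> (\<Inter>k\<in>K. maximizers A (\<phi> k))"
    if t: "t \<in> A" for t
  proof -
    have "(\<Sum>k\<in>K. \<phi> k t) = (\<Sum>k\<in>K. \<phi> k (tk k)) \<longleftrightarrow> (\<Sum>k\<in>K. \<phi> k (tk k) - \<phi> k t) = 0"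
      by (auto simp: sum_subtractf)
    also have "\<dots> \<longleftrightarrow> (\<forall>k\<in>K. \<phi> k (tk k) \<le> \<phi> k t)"
      using sum_nonneg_eq_0_iff[OF K(1), of "\<lambda>k. \<phi> k (tk k) - \<phi> k t"] tk_max(2)[OF _ t]
      by (auto intro: order.antisym)
    also have "\<dots> \<longleftrightarrow> t \<in> (\<Inter>k\<in>K. maximizers A (\<phi> k))"
      using t tk_max K(2) unfolding maximizers_def by auto (meson order_trans)
    finally show ?thesis .
  qed
  have sum_le: "(\<Sum>k\<in>K. \<phi> k t) \<le> (\<Sum>k\<in>K. \<phi> k (tk k))" if "t \<in> A" for t
    using tk_max(2)[OF _ that] by (rule sum_mono)
  have "t0 \<in> A" using t0 by (simp add: maximizers_def)
  have Inter_sub: "(\<Inter>k\<in>K. maximizers A (\<phi> k)) \<subseteq> A"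
    using K(2) by (auto simp: maximizers_def)
  show ?thesis
  proof
    assume "(\<Sum>k\<in>K. \<phi> k t0) = (\<Sum>k\<in>K. \<phi> k (tk k))"
    then have "maximizers A (\<lambda>t. \<Sum>k\<in>K. \<phi> k t) = {t \<in> A. (\<Sum>k\<in>K. \<phi> k t) = (\<Sum>k\<in>K. \<phi> k (tk k))}"
      using t0 sum_le unfolding maximizers_def by (auto intro: order.antisym) (metis order.antisym)
    then show "maximizers A (\<lambda>t. \<Sum>k\<in>K. \<phi> k t) = (\<Inter>k\<in>K. maximizers A (\<phi> k))"
      using sum_eq_iff Inter_sub by blast
  next
    assume "maximizers A (\<lambda>t. \<Sum>k\<in>K. \<phi> k t) = (\<Inter>k\<in>K. maximizers A (\<phi> k))"
    then show "(\<Sum>k\<in>K. \<phi> k t0) = (\<Sum>k\<in>K. \<phi> k (tk k))"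
      using sum_eq_iff[OF \<open>t0 \<in> A\<close>] t0 by blast
  qed
qed

section \<open>Upper semicontinuity\<close>

lemma le_sum_cInf:
  fixes f :: "'k \<Rightarrow> 'p \<Rightarrow> real"
  assumes "finite K" "\<And>k. k \<in> K \<Longrightarrow> P k \<noteq> {}"
    and "\<And>Q. (\<forall>k\<in>K. Q k \<in> P k) \<Longrightarrow> \<alpha> \<le> (\<Sum>k\<in>K. f k (Q k))"
  shows "\<alpha> \<le> (\<Sum>k\<in>K. Inf (f k ` P k))"
  using assms
proof (induction K arbitrary: \<alpha> rule: finite_induct)
  case empty
  then show ?case by simp
next
  case (insert k K)
  have "\<alpha> - (\<Sum>j\<in>K. Inf (f j ` P j)) \<le> f k p" if p: "p \<in> P k" for p
  proof -
    have "\<alpha> - f k p \<le> (\<Sum>j\<in>K. f j (Q j))" if "\<forall>j\<in>K. Q j \<in> P j" for Q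
    proof -
      have "(\<Sum>j\<in>K. f j ((Q(k := p)) j)) = (\<Sum>j\<in>K. f j (Q j))"
        using insert.hyps(2) by (intro sum.cong) auto
      moreover have "\<forall>j\<in>insert k K. (Q(k := p)) j \<in> P j" using p that by auto
      ultimately show ?thesis
        using insert.prems(2)[of "Q(k := p)"] insert.hyps by simp
    qed
    then show ?thesis using insert.IH insert.prems(1) by force
  qed
  then have "\<alpha> - (\<Sum>j\<in>K. Inf (f j ` P j)) \<le> Inf (f k ` P k)"
    using insert.prems(1) by (intro cInf_greatest) auto
  then show ?case using insert.hyps by simp
qed

lemma upper_semicontinuous_attains_max:
  fixes f :: "'a \<Rightarrow> real"
  assumes "compact_space X" "topspace X \<noteq> {}" "bdd_above (f ` topspace X)"
    and closed: "\<And>\<alpha>. closedin X {x \<in> topspace X. \<alpha> \<le> f x}"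
  shows "\<exists>x\<in>topspace X. \<forall>y\<in>topspace X. f y \<le> f x"
proof -
  define \<sigma> where "\<sigma> = (SUP x\<in>topspace X. f x)"
  define C where "C n = {x \<in> topspace X. \<sigma> - 1 / Suc n \<le> f x}" for n :: nat
  have "C n \<noteq> {}" for n
  proof -
    have "\<sigma> - 1 / Suc n < \<sigma>" by simp
    then obtain x where "x \<in> topspace X" "\<sigma> - 1 / Suc n < f x"
      using less_cSUP_iff[OF assms(2,3)] unfolding \<sigma>_def by blast
    then show ?thesis unfolding C_def by force
  qed
  moreover have "C n \<subseteq> C m" if "m \<le> n" for m n
  proof -
    have "1 / real (Suc n) \<le> 1 / real (Suc m)" using that by (simp add: frac_le)
    then show ?thesis unfolding C_def by force
  qed
  then have "decseq C" by (simp add: decseq_def)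
  ultimately obtain x where x: "\<And>n. x \<in> C n"
    using compact_space_imp_nest[OF assms(1), of C] closed unfolding C_def by blast
  have "\<sigma> \<le> f x"
  proof (rule field_le_epsilon)
    fix e :: real assume "0 < e"
    then obtain n where "1 / Suc n < e" using nat_approx_posE by blast
    then show "\<sigma> \<le> f x + e" using x[of n] by (auto simp: C_def)
  qed
  moreover have "f y \<le> \<sigma>" if "y \<in> topspace X" for y
    unfolding \<sigma>_def using assms(3) that by (rule cSUP_upper2) auto
  ultimately show ?thesis using x[of 0] unfolding C_def by force
qed

section \<open>Walks and shortest walk lengths\<close>

abbreviation nonneg_tolls :: "('v,'e,'k,'z) network_scheme \<Rightarrow> ('e \<Rightarrow> real) \<Rightarrow> bool" where
  "nonneg_tolls G t \<equiv> \<forall>e\<in>tolled G. 0 \<le> t e"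

definition feasible_tolls :: "('v,'e,'k,'z) network_scheme \<Rightarrow> ('e \<Rightarrow> real) set" where
  "feasible_tolls G = {t \<in> tollvecs (tolled G). nonneg_tolls G t}"

definition arc_len :: "('v,'e,'k,'z) network_scheme \<Rightarrow> ('e \<Rightarrow> real) \<Rightarrow> 'e \<Rightarrow> real" where
  "arc_len G t e = cost G e + text_bar G t e"

inductive walk :: "('v,'e,'k,'z) network_scheme \<Rightarrow> 'v \<Rightarrow> 'e list \<Rightarrow> 'v \<Rightarrow> bool" for G where
  walk_Nil: "walk G u [] u"
| walk_Cons: "e \<in> arcs G \<Longrightarrow> walk G (tgt G e) es v \<Longrightarrow> walk G (src G e) (e # es) v"

definition walk_len :: "('v,'e,'k,'z) network_scheme \<Rightarrow> ('e \<Rightarrow> real) \<Rightarrow> 'e list \<Rightarrow> real" where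
  "walk_len G t es = (\<Sum>e\<leftarrow>es. arc_len G t e)"

definition walk_dist :: "('v,'e,'k,'z) network_scheme \<Rightarrow> ('e \<Rightarrow> real) \<Rightarrow> 'v \<Rightarrow> 'v \<Rightarrow> real" where
  "walk_dist G t u v = Inf (walk_len G t ` {es. walk G u es v})"

lemma walk_arcs: "walk G u es v \<Longrightarrow> set es \<subseteq> arcs G"
  by (induction rule: walk.induct) auto

lemma walk_len_Cons [simp]: "walk_len G t (e # es) = arc_len G t e + walk_len G t es"
  by (simp add: walk_len_def)

lemma arc_len_nonneg:
  "valid_network G \<Longrightarrow> nonneg_tolls G t \<Longrightarrow> e \<in> arcs G \<Longrightarrow> 0 \<le> arc_len G t e"
  by (auto simp: valid_network_def arc_len_def text_bar_def)

lemma arc_len_le_walk_len: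
  assumes "valid_network G" "nonneg_tolls G t" "walk G u es v" "e \<in> set es"
  shows "arc_len G t e \<le> walk_len G t es"
  unfolding walk_len_def using assms walk_arcs[OF assms(3)]
  by (intro member_le_sum_list) (auto intro: arc_len_nonneg)

lemma walk_len_nonneg:
  assumes "valid_network G" "nonneg_tolls G t" "walk G u es v"
  shows "0 \<le> walk_len G t es"
  unfolding walk_len_def using assms walk_arcs[OF assms(3)]
  by (intro sum_list_nonneg) (auto intro: arc_len_nonneg)

lemma walk_len_toll_free: "set es \<inter> tolled G = {} \<Longrightarrow> walk_len G t es = walk_len G t' es"
  unfolding walk_len_def arc_len_def text_bar_def by (intro arg_cong[where f = sum_list]) auto

lemma walk_dist_le:
  assumes "valid_network G" "nonneg_tolls G t" "walk G u es v"
  shows "walk_dist G t u v \<le> walk_len G t es"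
  unfolding walk_dist_def using assms walk_len_nonneg[OF assms(1,2)]
  by (intro cInf_lower bdd_belowI[of _ 0]) auto

lemma walk_dist_nonneg:
  assumes "valid_network G" "nonneg_tolls G t" "walk G u es v"
  shows "0 \<le> walk_dist G t u v"
  unfolding walk_dist_def using assms walk_len_nonneg[OF assms(1,2)]
  by (intro cInf_greatest) auto

lemma walk_dist_self:
  assumes "valid_network G" "nonneg_tolls G t"
  shows "walk_dist G t v v = 0"
  using walk_dist_le[OF assms walk_Nil, of v] walk_dist_nonneg[OF assms walk_Nil, of v]
  by (simp add: walk_len_def)

lemma walk_dist_Cons_le:
  assumes "valid_network G" "nonneg_tolls G t" "e \<in> arcs G" "walk G (tgt G e) es v"
  shows "walk_dist G t (src G e) v \<le> arc_len G t e + walk_dist G t (tgt G e) v"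
proof -
  have "walk_dist G t (src G e) v - arc_len G t e \<le> walk_len G t es'"
    if "walk G (tgt G e) es' v" for es'
    using walk_dist_le[OF assms(1,2) walk_Cons[OF assms(3) that]] by simp
  then have "walk_dist G t (src G e) v - arc_len G t e \<le> walk_dist G t (tgt G e) v"
    unfolding walk_dist_def[of G t "tgt G e"] using assms(4) by (intro cInf_greatest) auto
  then show ?thesis by simp
qed

lemma toll_free_walk:
  assumes "valid_network G" "k \<in> comms G"
  shows "\<exists>es. walk G (orig G k) es (dest G k) \<and> set es \<inter> tolled G = {}"
proof -
  have walk_of_path: "\<exists>es. walk G u es v \<and> set es \<inter> tolled G = {}"
    if "(u, v) \<in> {(src G e, tgt G e) | e. e \<in> arcs G - tolled G}\<^sup>*" for u v
    using that
  proof (induction rule: converse_rtrancl_induct)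
    case base
    show ?case using walk_Nil by (intro exI[of _ "[]"]) simp
  next
    case (step u u')
    from step.hyps(1) obtain e where e: "e \<in> arcs G" "e \<notin> tolled G" "u = src G e" "u' = tgt G e"
      by blast
    from step.IH obtain es where es: "walk G u' es v" "set es \<inter> tolled G = {}"
      by blast
    have "walk G u (e # es) v" using walk_Cons[OF e(1)] es(1) e(3,4) by simp
    then show ?case using es(2) e(2) by (intro exI[of _ "e # es"]) simp
  qed
  have "(orig G k, dest G k) \<in> {(src G e, tgt G e) | e. e \<in> arcs G - tolled G}\<^sup>*"
    using assms unfolding valid_network_def by blast
  then show ?thesis by (rule walk_of_path)
qed

section \<open>Shortest-path duality\<close>

lemma sum_arcs_text_bar:
  assumes "valid_network G"
  shows "(\<Sum>e\<in>arcs G. text_bar G t e * x e) = (\<Sum>e\<in>tolled G. t e * x e)"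
proof -
  have "finite (arcs G)" "tolled G \<subseteq> arcs G" using assms by (auto simp: valid_network_def)
  have "(\<Sum>e\<in>arcs G. text_bar G t e * x e) = (\<Sum>e\<in>arcs G. if e \<in> tolled G then t e * x e else 0)"
    by (rule sum.cong) (auto simp: text_bar_def)
  also have "\<dots> = (\<Sum>e\<in>tolled G. t e * x e)"
    using \<open>finite (arcs G)\<close> \<open>tolled G \<subseteq> arcs G\<close> by (simp add: sum.inter_restrict[symmetric] Int_absorb1)
  finally show ?thesis .
qed

lemma primal_objective_eq_arc_len:
  assumes "valid_network G"
  shows "(\<Sum>e\<in>arcs G. cost G e * x e) + (\<Sum>e\<in>tolled G. t e * x e) = (\<Sum>e\<in>arcs G. x e * arc_len G t e)"
  using sum_arcs_text_bar[OF assms] by (simp add: arc_len_def algebra_simps sum.distrib)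

lemma bdot_eq_potential_diff:
  assumes "valid_network G" "k \<in> comms G"
  shows "bdot G k y = y (orig G k) - y (dest G k)"
proof -
  have "bdot G k y = (\<Sum>v\<in>nodes G. (if v = orig G k then y v else 0) - (if v = dest G k then y v else 0))"
    unfolding bdot_def bvec_def by (rule sum.cong) auto
  also have "\<dots> = y (orig G k) - y (dest G k)"
    using assms unfolding valid_network_def by (simp add: sum_subtractf)
  finally show ?thesis .
qed

lemma netflow_eq_sum_arcs:
  "netflow G x n = (\<Sum>e\<in>arcs G. x e * ((if src G e = n then 1 else 0) - (if tgt G e = n then 1 else 0)))"
  unfolding netflow_def by (simp add: right_diff_distrib sum_subtractf if_distrib[of "\<lambda>a. _ * a"] cong: if_cong)

lemma sum_netflow_mult:
  assumes "valid_network G"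
  shows "(\<Sum>v\<in>nodes G. netflow G x v * y v) = (\<Sum>e\<in>arcs G. x e * (y (src G e) - y (tgt G e)))"
proof -
  have fin: "finite (nodes G)" and ends: "\<And>e. e \<in> arcs G \<Longrightarrow> src G e \<in> nodes G \<and> tgt G e \<in> nodes G"
    using assms by (auto simp: valid_network_def)
  have "(\<Sum>v\<in>nodes G. netflow G x v * y v)
      = (\<Sum>e\<in>arcs G. \<Sum>v\<in>nodes G. x e * ((if src G e = v then y v else 0) - (if tgt G e = v then y v else 0)))"
    unfolding netflow_eq_sum_arcs sum_distrib_right by (subst sum.swap) (auto intro!: sum.cong)
  also have "\<dots> = (\<Sum>e\<in>arcs G. x e * (y (src G e) - y (tgt G e)))"
    using fin ends by (intro sum.cong) (simp_all add: sum_distrib_left[symmetric] sum_subtractf sum.delta)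
  finally show ?thesis .
qed

lemma weak_duality:
  assumes "valid_network G" "x \<in> Xset G k" "dual_feas G t y"
  shows "bdot G k y \<le> (\<Sum>e\<in>arcs G. cost G e * x e) + (\<Sum>e\<in>tolled G. t e * x e)"
proof -
  have "bdot G k y = (\<Sum>v\<in>nodes G. netflow G x v * y v)"
    unfolding bdot_def using assms(2) by (intro sum.cong) (auto simp: Xset_def)
  also have "\<dots> = (\<Sum>e\<in>arcs G. x e * (y (src G e) - y (tgt G e)))"
    using sum_netflow_mult[OF assms(1)] .
  also have "\<dots> \<le> (\<Sum>e\<in>arcs G. x e * arc_len G t e)"
    using assms(2,3) by (intro sum_mono mult_left_mono) (auto simp: Xset_def dual_feas_def arc_len_def)
  finally show ?thesis using primal_objective_eq_arc_len[OF assms(1)] by simp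
qed

definition walk_flow :: "'e list \<Rightarrow> 'e \<Rightarrow> real" where
  "walk_flow es e = real (count_list es e)"

lemma sum_walk_flow:
  assumes "finite A" "set es \<subseteq> A"
  shows "(\<Sum>e\<in>A. walk_flow es e * g e) = (\<Sum>e\<leftarrow>es. g e)"
  using assms(2)
proof (induction es)
  case Nil
  then show ?case by (simp add: walk_flow_def)
next
  case (Cons e es)
  have "walk_flow (e # es) e' * g e' = walk_flow es e' * g e' + (if e' = e then g e' else 0)" for e'
    by (simp add: walk_flow_def distrib_right)
  then show ?case using Cons assms(1) by (simp add: sum.distrib)
qed

lemma walk_telescope:
  "walk G u es v \<Longrightarrow>
    (\<Sum>e\<leftarrow>es. (if src G e = n then 1 else 0) - (if tgt G e = n then 1 else 0)) =
    (if n = u then 1 else 0) - (if n = v then (1::real) else 0)"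
  by (induction rule: walk.induct) auto

lemma walk_flow_Xset:
  assumes "valid_network G" "walk G (orig G k) es (dest G k)"
  shows "walk_flow es \<in> Xset G k"
proof -
  have "finite (arcs G)" using assms(1) by (simp add: valid_network_def)
  then have "netflow G (walk_flow es) n = bvec G k n" for n
    unfolding netflow_eq_sum_arcs bvec_def
    using sum_walk_flow[OF _ walk_arcs[OF assms(2)]] walk_telescope[OF assms(2)] by simp
  then show ?thesis by (simp add: Xset_def walk_flow_def)
qed

lemma primal_objective_walk_flow:
  assumes "valid_network G" "walk G u es v"
  shows "(\<Sum>e\<in>arcs G. cost G e * walk_flow es e) + (\<Sum>e\<in>tolled G. t e * walk_flow es e)
       = walk_len G t es"
proof -
  have "finite (arcs G)" using assms(1) by (simp add: valid_network_def)
  then show ?thesis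
    using primal_objective_eq_arc_len[OF assms(1)] sum_walk_flow[OF _ walk_arcs[OF assms(2)], of "arc_len G t"]
    by (simp add: walk_len_def)
qed

lemma dual_le_walk_dist:
  assumes G: "valid_network G" and k: "k \<in> comms G" and y: "dual_feas G t y"
  shows "bdot G k y \<le> walk_dist G t (orig G k) (dest G k)"
  unfolding walk_dist_def
proof (rule cInf_greatest)
  show "walk_len G t ` {es. walk G (orig G k) es (dest G k)} \<noteq> {}"
    using toll_free_walk[OF G k] by blast
next
  fix d assume "d \<in> walk_len G t ` {es. walk G (orig G k) es (dest G k)}"
  then obtain es where es: "walk G (orig G k) es (dest G k)" and "d = walk_len G t es" by blast
  then show "bdot G k y \<le> d"
    using weak_duality[OF G walk_flow_Xset[OF G es] y] primal_objective_walk_flow[OF G es] by simp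
qed

lemma strong_duality:
  assumes G: "valid_network G" and k: "k \<in> comms G" and t: "nonneg_tolls G t"
  shows "\<exists>y. dual_feas G t y \<and> bdot G k y = walk_dist G t (orig G k) (dest G k)"
proof -
  let ?d = "dest G k"
  define M where "M = walk_dist G t (orig G k) ?d"
  \<comment> \<open>capping at M keeps the potential finite where d is unreachable, without losing feasibility\<close>
  define y where "y u = (if \<exists>es. walk G u es ?d then min M (walk_dist G t u ?d) else M)" for u
  have "0 \<le> M" unfolding M_def using toll_free_walk[OF G k] walk_dist_nonneg[OF G t] by blast
  have "y (src G e) - y (tgt G e) \<le> arc_len G t e" if e: "e \<in> arcs G" for e
  proof (cases "\<exists>es. walk G (tgt G e) es ?d")
    case True
    then obtain es where es: "walk G (tgt G e) es ?d" ..
    then have "y (src G e) = min M (walk_dist G t (src G e) ?d)"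
      and "y (tgt G e) = min M (walk_dist G t (tgt G e) ?d)"
      using walk_Cons[OF e es] unfolding y_def by auto
    then show ?thesis
      using walk_dist_Cons_le[OF G t e es] arc_len_nonneg[OF G t e] by (auto simp: min_def)
  next
    case False
    then show ?thesis using arc_len_nonneg[OF G t e] unfolding y_def by auto
  qed
  then have "dual_feas G t y" using t by (auto simp: dual_feas_def arc_len_def diff_le_eq)
  moreover have "y (orig G k) = M"
    using toll_free_walk[OF G k] unfolding y_def M_def by auto
  moreover have "y ?d = 0"
    using walk_Nil[of G ?d] walk_dist_self[OF G t] \<open>0 \<le> M\<close> unfolding y_def by auto
  ultimately show ?thesis using bdot_eq_potential_diff[OF G k] M_def by auto
qed

lemma fk_eq_walk_dist:
  assumes G: "valid_network G" and k: "k \<in> comms G" and t: "nonneg_tolls G t"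
  shows "fk G k t = ereal (walk_dist G t (orig G k) (dest G k))"
proof (rule antisym)
  define primal where "primal x = ereal ((\<Sum>e\<in>arcs G. cost G e * x e) + (\<Sum>e\<in>tolled G. t e * x e))" for x
  have fk: "fk G k t = (INF x\<in>Xset G k. primal x)" using t by (simp add: fk_def primal_def)
  let ?walks = "{es. walk G (orig G k) es (dest G k)}"
  have "(INF x\<in>Xset G k. primal x) \<le> (INF es\<in>?walks. ereal (walk_len G t es))"
    using walk_flow_Xset[OF G] primal_objective_walk_flow[OF G]
    by (intro INF_greatest INF_lower2) (auto simp: primal_def)
  also have "\<dots> = ereal (walk_dist G t (orig G k) (dest G k))"
    unfolding walk_dist_def using toll_free_walk[OF G k] walk_len_nonneg[OF G t]
    by (subst ereal_Inf') (auto intro: bdd_belowI[of _ 0] simp: image_comp)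
  finally show "fk G k t \<le> ereal (walk_dist G t (orig G k) (dest G k))" using fk by simp
  obtain y where y: "dual_feas G t y" "bdot G k y = walk_dist G t (orig G k) (dest G k)"
    using strong_duality[OF G k t] by blast
  have "ereal (walk_dist G t (orig G k) (dest G k)) \<le> (INF x\<in>Xset G k. primal x)"
    using weak_duality[OF G _ y(1), where k = k] y(2) by (intro INF_greatest) (simp add: primal_def)
  then show "ereal (walk_dist G t (orig G k) (dest G k)) \<le> fk G k t" using fk by simp
qed

text \<open>For tolls t \<ge> 0, \<open>dual_value G K w t\<close> is the paper's \<open>\<Sum>k\<in>K. f\<^sup>k(t) - t\<^sup>T w\<close>
  (by \<open>fk_eq_walk_dist\<close>), i.e. the dual objective with the potentials optimized out.\<close>

definition dual_value :: "('v,'e,'k,'z) network_scheme \<Rightarrow> 'k set \<Rightarrow> ('e \<Rightarrow> real) \<Rightarrow> ('e \<Rightarrow> real) \<Rightarrow> real" where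
  "dual_value G K w t = (\<Sum>k\<in>K. walk_dist G t (orig G k) (dest G k)) - tdot G t w"

lemma dual_value_sum:
  assumes "finite K"
  shows "dual_value G K (\<lambda>e. \<Sum>k\<in>K. w k e) t = (\<Sum>k\<in>K. dual_value G {k} (w k) t)"
  using assms unfolding dual_value_def tdot_def
  by (simp add: sum_subtractf sum_distrib_left sum.swap[of _ "tolled G"])

lemma Tk_eq_maximizers:
  assumes G: "valid_network G" and k: "k \<in> comms G"
  shows "Tk G k w = maximizers (feasible_tolls G) (dual_value G {k} w)"
proof -
  have "Tk G k w = maximizers {t \<in> tollvecs (tolled G). nonneg_tolls G t}
      (\<lambda>t. walk_dist G t (orig G k) (dest G k) - tdot G t w)"
    unfolding Tk_def
  proof (rule maximizers_partial_max[where F = "dual_feas G" and obj = "bdot G k"])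
    show "nonneg_tolls G t" if "dual_feas G t y" for t y
      using that by (simp add: dual_feas_def)
    show "\<exists>y. dual_feas G t y \<and> bdot G k y = walk_dist G t (orig G k) (dest G k)"
      if "nonneg_tolls G t" for t
      using strong_duality[OF G k that] .
    show "bdot G k y \<le> walk_dist G t (orig G k) (dest G k)" if "dual_feas G t y" for t y
      using dual_le_walk_dist[OF G k that] .
  qed
  then show ?thesis by (simp add: feasible_tolls_def dual_value_def[abs_def])
qed

lemma Ttot_eq_maximizers:
  assumes G: "valid_network G"
  shows "Ttot G W = maximizers (feasible_tolls G) (dual_value G (comms G) W)"
proof -
  have "Ttot G W = maximizers {t \<in> tollvecs (tolled G). nonneg_tolls G t}
      (\<lambda>t. (\<Sum>k\<in>comms G. walk_dist G t (orig G k) (dest G k)) - tdot G t W)"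
    unfolding Ttot_def
  proof (rule maximizers_partial_max[where F = "\<lambda>t Y. \<forall>k\<in>comms G. dual_feas G t (Y k)"
        and obj = "\<lambda>Y. \<Sum>k\<in>comms G. bdot G k (Y k)"])
    show "nonneg_tolls G t" if "\<forall>k\<in>comms G. dual_feas G t (Y k)" for t Y
    proof -
      obtain k where "k \<in> comms G" using G by (auto simp: valid_network_def)
      then show ?thesis using that by (auto simp: dual_feas_def)
    qed
    show "\<exists>Y. (\<forall>k\<in>comms G. dual_feas G t (Y k)) \<and>
        (\<Sum>k\<in>comms G. bdot G k (Y k)) = (\<Sum>k\<in>comms G. walk_dist G t (orig G k) (dest G k))"
      if "nonneg_tolls G t" for t
    proof -
      have "\<forall>k\<in>comms G. \<exists>y. dual_feas G t y \<and> bdot G k y = walk_dist G t (orig G k) (dest G k)"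
        using strong_duality[OF G _ that] by blast
      then obtain Y where "\<forall>k\<in>comms G. dual_feas G t (Y k) \<and> bdot G k (Y k) = walk_dist G t (orig G k) (dest G k)"
        by (rule bchoice[THEN exE])
      then show ?thesis by (intro exI[of _ Y]) simp
    qed
    show "(\<Sum>k\<in>comms G. bdot G k (Y k)) \<le> (\<Sum>k\<in>comms G. walk_dist G t (orig G k) (dest G k))"
      if "\<forall>k\<in>comms G. dual_feas G t (Y k)" for t Y
      using that dual_le_walk_dist[OF G] by (intro sum_mono) blast
  qed
  then show ?thesis by (simp add: feasible_tolls_def dual_value_def[abs_def])
qed

lemma SUP_ereal_maximizer:
  assumes "t0 \<in> maximizers {t \<in> S. P t} f"
  shows "(SUP t\<in>S. if P t then ereal (f t) else -\<infinity>) = ereal (f t0)"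
  using assms unfolding maximizers_def by (intro cSup_eq_maximum) (auto intro!: rev_image_eqI)

lemma gk_eq_max:
  assumes G: "valid_network G" and k: "k \<in> comms G"
    and tk: "tk \<in> maximizers (feasible_tolls G) (dual_value G {k} w)"
  shows "gk G k w = ereal (dual_value G {k} w tk)"
proof -
  have "fk G k t - ereal (tdot G t w) = (if nonneg_tolls G t then ereal (dual_value G {k} w t) else -\<infinity>)" for t
    by (cases "nonneg_tolls G t") (simp add: fk_eq_walk_dist[OF G k] dual_value_def, auto simp: fk_def)
  then show ?thesis
    unfolding gk_def by (simp only:) (rule SUP_ereal_maximizer[OF tk[unfolded feasible_tolls_def]])
qed

lemma gtot_eq_max:
  assumes G: "valid_network G"
    and t0: "t0 \<in> maximizers (feasible_tolls G) (dual_value G (comms G) W)"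
  shows "gtot G W = ereal (dual_value G (comms G) W t0)"
proof -
  have K: "finite (comms G)" "comms G \<noteq> {}" using G by (auto simp: valid_network_def)
  have "ftot G t - ereal (tdot G t W) = (if nonneg_tolls G t then ereal (dual_value G (comms G) W t) else -\<infinity>)" for t
  proof (cases "nonneg_tolls G t")
    case True
    then show ?thesis by (simp add: ftot_def fk_eq_walk_dist[OF G] dual_value_def)
  next
    case False
    then have "fk G k t = -\<infinity>" for k by (auto simp: fk_def)
    moreover have "(\<Sum>k\<in>comms G. -\<infinity>) = (-\<infinity> :: ereal)"
      using K by (induction rule: finite_ne_induct) simp_all
    ultimately show ?thesis using False by (simp add: ftot_def)
  qed
  then show ?thesis
    unfolding gtot_def by (simp only:) (rule SUP_ereal_maximizer[OF t0[unfolded feasible_tolls_def]])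
qed

section \<open>Attainment of the maximal dual value\<close>

lemma continuous_on_walk_len: "continuous_on UNIV (\<lambda>t. walk_len G t es)"
proof (induction es)
  case Nil
  then show ?case by (simp add: walk_len_def)
next
  case (Cons e es)
  have "continuous_on UNIV (\<lambda>t. text_bar G t e)"
    by (cases "e \<in> tolled G") (simp_all add: text_bar_def)
  with Cons show ?case by (simp add: arc_len_def continuous_intros)
qed

lemma continuous_on_tdot: "continuous_on UNIV (\<lambda>t. tdot G t W)"
  unfolding tdot_def by (intro continuous_intros) simp

lemma closedin_dual_value_superlevel:
  assumes G: "valid_network G" and K: "K \<subseteq> comms G" and S: "S \<subseteq> feasible_tolls G"
  shows "closedin (top_of_set S) {t \<in> S. \<alpha> \<le> dual_value G K W t}"
proof -
  \<comment> \<open>\<open>dual_value\<close> is the infimum over route systems Q of functions continuous in t\<close>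
  let ?routes = "{Q. \<forall>k\<in>K. walk G (orig G k) (Q k) (dest G k)}"
  define C where "C Q = {t. \<alpha> \<le> (\<Sum>k\<in>K. walk_len G t (Q k)) - tdot G t W}" for Q
  have "{t \<in> S. \<alpha> \<le> dual_value G K W t} = S \<inter> \<Inter>(C ` ?routes)"
  proof (intro equalityI subsetI)
    fix t assume "t \<in> {t \<in> S. \<alpha> \<le> dual_value G K W t}"
    then have t: "t \<in> S" "nonneg_tolls G t" and le: "\<alpha> \<le> dual_value G K W t"
      using S by (auto simp: feasible_tolls_def)
    have "dual_value G K W t \<le> (\<Sum>k\<in>K. walk_len G t (Q k)) - tdot G t W" if "Q \<in> ?routes" for Q
      unfolding dual_value_def using that walk_dist_le[OF G t(2)] by (simp add: sum_mono)
    with t le show "t \<in> S \<inter> \<Inter>(C ` ?routes)" by (force simp: C_def)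
  next
    fix t assume t: "t \<in> S \<inter> \<Inter>(C ` ?routes)"
    have "finite K" using G K finite_subset by (auto simp: valid_network_def)
    moreover have "{es. walk G (orig G k) es (dest G k)} \<noteq> {}" if "k \<in> K" for k
      using toll_free_walk[OF G] that K by blast
    moreover have "\<alpha> + tdot G t W \<le> (\<Sum>k\<in>K. walk_len G t (Q k))"
      if "\<forall>k\<in>K. Q k \<in> {es. walk G (orig G k) es (dest G k)}" for Q
      using t that by (auto simp: C_def)
    ultimately have "\<alpha> + tdot G t W \<le> (\<Sum>k\<in>K. walk_dist G t (orig G k) (dest G k))"
      unfolding walk_dist_def by (rule le_sum_cInf)
    with t show "t \<in> {t \<in> S. \<alpha> \<le> dual_value G K W t}" by (simp add: dual_value_def)
  qed
  moreover have "closed (C Q)" for Q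
    unfolding C_def by (intro closed_Collect_le continuous_intros continuous_on_walk_len continuous_on_tdot)
  ultimately show ?thesis by (simp add: closedin_closed_Int closed_Inter)
qed

lemma walk_dist_le_capped:
  assumes G: "valid_network G" and t: "nonneg_tolls G t" and uv: "walk G u es v"
    and M: "walk_dist G t u v \<le> M"
  shows "walk_dist G t u v \<le> walk_dist G (\<lambda>e. min (t e) M) u v"
  unfolding walk_dist_def[of G "\<lambda>e. min (t e) M"]
proof (rule cInf_greatest)
  show "walk_len G (\<lambda>e. min (t e) M) ` {es. walk G u es v} \<noteq> {}" using uv by blast
next
  fix d assume "d \<in> walk_len G (\<lambda>e. min (t e) M) ` {es. walk G u es v}"
  then obtain P where P: "walk G u P v" and d: "d = walk_len G (\<lambda>e. min (t e) M) P" by blast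
  have capped: "nonneg_tolls G (\<lambda>e. min (t e) M)"
    using t walk_dist_nonneg[OF G t uv] M by auto
  show "walk_dist G t u v \<le> d"
  proof (cases "\<exists>e\<in>set P. e \<in> tolled G \<and> M < t e")
    case True
    then obtain e where e: "e \<in> set P" "e \<in> tolled G" "M < t e" by blast
    have "0 \<le> cost G e" using G walk_arcs[OF P] e(1) by (auto simp: valid_network_def)
    then have "M \<le> arc_len G (\<lambda>e. min (t e) M) e" using e by (simp add: arc_len_def text_bar_def)
    also have "\<dots> \<le> d" using arc_len_le_walk_len[OF G capped P e(1)] d by simp
    finally show ?thesis using M by linarith
  next
    case False
    then have "walk_len G (\<lambda>e. min (t e) M) P = walk_len G t P"
      unfolding walk_len_def arc_len_def text_bar_def by (intro arg_cong[where f = sum_list]) auto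
    then show ?thesis using walk_dist_le[OF G t P] d by simp
  qed
qed

lemma dual_value_attains_max:
  assumes G: "valid_network G" and K: "K \<subseteq> comms G" and W: "nonneg_tolls G W"
  shows "\<exists>t0. t0 \<in> maximizers (feasible_tolls G) (dual_value G K W)"
proof -
  let ?A = "feasible_tolls G" and ?f = "dual_value G K W"
  have "\<forall>k\<in>K. \<exists>es. walk G (orig G k) es (dest G k) \<and> set es \<inter> tolled G = {}"
    using toll_free_walk[OF G] K by blast
  then obtain P where P: "\<And>k. k \<in> K \<Longrightarrow> walk G (orig G k) (P k) (dest G k)"
    "\<And>k. k \<in> K \<Longrightarrow> set (P k) \<inter> tolled G = {}" by metis
  define M where "M = (\<Sum>k\<in>K. walk_len G (\<lambda>_. 0) (P k))"
  have finK: "finite K" using G K finite_subset by (auto simp: valid_network_def)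
  have dist_le: "walk_dist G t (orig G k) (dest G k) \<le> walk_len G (\<lambda>_. 0) (P k)"
    if "t \<in> ?A" "k \<in> K" for t k
    using walk_dist_le[OF G _ P(1)[OF that(2)], of t] walk_len_toll_free[OF P(2)[OF that(2)], of t "\<lambda>_. 0"] that
    by (simp add: feasible_tolls_def)
  have len_nonneg: "0 \<le> walk_len G (\<lambda>_. 0) (P k)" if "k \<in> K" for k
    using walk_len_nonneg[OF G _ P(1)[OF that]] by simp
  have "0 \<le> M" unfolding M_def using len_nonneg by (simp add: sum_nonneg)
  have len_le_M: "walk_len G (\<lambda>_. 0) (P k) \<le> M" if "k \<in> K" for k
    unfolding M_def using that len_nonneg finK by (intro member_le_sum) auto
  \<comment> \<open>tolls above M only make routes longer than the toll-free ones, so capping them at M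
    does not decrease the dual value; this confines the maximization to the compact box B\<close>
  define cap where "cap t = (\<lambda>e. min (t e) M)" for t :: "'b \<Rightarrow> real"
  define B where "B = PiE UNIV (\<lambda>e. if e \<in> tolled G then {0..M} else {0::real})"
  have B_A: "B \<subseteq> ?A" unfolding B_def feasible_tolls_def tollvecs_def by (auto simp: PiE_def Pi_def)
  have cap_B: "cap t \<in> B" if "t \<in> ?A" for t
    using that \<open>0 \<le> M\<close> unfolding B_def cap_def feasible_tolls_def tollvecs_def by auto
  have f_cap: "?f t \<le> ?f (cap t)" if t: "t \<in> ?A" for t
  proof -
    have "walk_dist G t (orig G k) (dest G k) \<le> walk_dist G (cap t) (orig G k) (dest G k)" if "k \<in> K" for k
      unfolding cap_def using t that dist_le[OF t that] len_le_M[OF that]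
      by (intro walk_dist_le_capped[OF G _ P(1)]) (auto simp: feasible_tolls_def)
    moreover have "tdot G (cap t) W \<le> tdot G t W"
      unfolding tdot_def cap_def using W by (intro sum_mono mult_right_mono) auto
    ultimately show ?thesis unfolding dual_value_def by (smt (verit) sum_mono)
  qed
  have f_bounded: "?f t \<le> M" if "t \<in> ?A" for t
  proof -
    have "0 \<le> tdot G t W" unfolding tdot_def using that W by (auto simp: feasible_tolls_def intro: sum_nonneg)
    then show ?thesis unfolding dual_value_def M_def using dist_le[OF that] by (smt (verit) sum_mono)
  qed
  have "compactin (product_topology (\<lambda>_. euclideanreal) UNIV) B"
    unfolding B_def by (auto simp: compactin_PiE)
  then have "compact_space (top_of_set B)"
    by (simp add: euclidean_product_topology compact_space_subtopology)
  moreover have "(\<lambda>_. 0) \<in> B" using \<open>0 \<le> M\<close> by (simp add: B_def PiE_UNIV_domain)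
  moreover have "bdd_above (?f ` B)" using f_bounded B_A by (intro bdd_aboveI2[of _ _ M]) auto
  ultimately have "\<exists>t0\<in>B. \<forall>t\<in>B. ?f t \<le> ?f t0"
    using closedin_dual_value_superlevel[OF G K B_A]
    by (intro upper_semicontinuous_attains_max[of "top_of_set B", simplified]) auto
  then obtain t0 where t0: "t0 \<in> B" "\<And>t. t \<in> B \<Longrightarrow> ?f t \<le> ?f t0" by blast
  have "?f t \<le> ?f t0" if "t \<in> ?A" for t
    using f_cap[OF that] t0(2)[OF cap_B[OF that]] by linarith
  then show ?thesis using t0(1) B_A unfolding maximizers_def by blast
qed

theorem lemma5:
  fixes G :: "('v, 'e, 'k) network" and w :: "'k \<Rightarrow> 'e \<Rightarrow> real"
  assumes "valid_network G"
    and "\<forall>k\<in>comms G. w k \<in> tollvecs (tolled G) \<and> (\<forall>e\<in>tolled G. 0 \<le> w k e)"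
  shows "gtot G (\<lambda>e. \<Sum>k\<in>comms G. w k e) = (\<Sum>k\<in>comms G. gk G k (w k))
     \<longleftrightarrow> Ttot G (\<lambda>e. \<Sum>k\<in>comms G. w k e) = (\<Inter>k\<in>comms G. Tk G k (w k))"
proof -
  let ?K = "comms G" and ?A = "feasible_tolls G" and ?W = "\<lambda>e. \<Sum>k\<in>comms G. w k e"
  have G: "valid_network G" and K: "finite ?K" "?K \<noteq> {}"
    using assms(1) by (auto simp: valid_network_def)
  have W: "nonneg_tolls G ?W" using assms(2) by (auto intro: sum_nonneg)
  obtain t0 where t0: "t0 \<in> maximizers ?A (dual_value G ?K ?W)"
    using dual_value_attains_max[OF G order_refl W] by blast
  have "\<exists>tk. tk \<in> maximizers ?A (dual_value G {k} (w k))" if "k \<in> ?K" for k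
    using dual_value_attains_max[of G "{k}" "w k"] G that assms(2) by simp
  then obtain tk where tk: "\<And>k. k \<in> ?K \<Longrightarrow> tk k \<in> maximizers ?A (dual_value G {k} (w k))"
    by metis
  have split: "dual_value G ?K ?W = (\<lambda>t. \<Sum>k\<in>?K. dual_value G {k} (w k) t)"
    by (rule ext) (rule dual_value_sum[OF K(1)])
  have "gtot G ?W = (\<Sum>k\<in>?K. gk G k (w k))
      \<longleftrightarrow> dual_value G ?K ?W t0 = (\<Sum>k\<in>?K. dual_value G {k} (w k) (tk k))"
    using gtot_eq_max[OF G t0] gk_eq_max[OF G _ tk] by simp
  also have "\<dots> \<longleftrightarrow> maximizers ?A (dual_value G ?K ?W) = (\<Inter>k\<in>?K. maximizers ?A (dual_value G {k} (w k)))"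
    unfolding split by (rule max_sum_eq_sum_max_iff_maximizers_eq_Inter[OF K tk t0[unfolded split]])
  also have "\<dots> \<longleftrightarrow> Ttot G ?W = (\<Inter>k\<in>?K. Tk G k (w k))"
    using Ttot_eq_maximizers[OF G] Tk_eq_maximizers[OF G] by simp
  finally show ?thesis .
qed

end
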